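(* Let $K\ge 1$ and let $Y,\hat Y\in[K]=\{1,\dots,K\}$, $A\in\{0,1\}$, $D\in\{0,1\}$ be jointly distributed random variables such that $\mathbb{P}(\hat Y=Y\mid D=1)=1$, and let $p_D:=\mathbb{P}(D=1)$. Assume $p^+\in(0,1)$, and that all conditional probabilities below are well-defined (all conditioning events have positive probability; in particular $p_y^+>0$ and $p_y-p_y^+>0$). Then for all $y,\hat y\in[K]$: \[ \Delta\mathrm{s.p.}(\hat y)=\frac{p_D}{p^+(1-p^+)}\Bigl(\varphi^+_{\hat y}(p^+-q^+)-(q_{\hat y}p^+-q^+_{\hat y})\Bigr)+\Delta\mathrm{s.p.}(\hat y\mid D=0)\Bigl(1-p_D\frac{1-q^+}{1-p^+}\Bigr), \] \[ \Delta\mathrm{eq.opp.}(y)=\frac{p_D}{p_y^+(p_y-p_y^+)}\bigl(C^+_{y,y}-1\bigr)(q_yp_y^+-p_yq_y^+)+\Delta\mathrm{eq.opp.}(y\mid D=0)\Bigl(1-p_D\frac{q_y-q_y^+}{p_y-p_y^+}\Bigr), \] \[ \Delta\mathrm{eq.odds}(y,\hat y)=\frac{p_D}{p_y^+(p_y-p_y^+)}\bigl(C^+_{y,\hat y}-\mathbb{1}\{y=\hat y\}\bigr)(q_yp_y^+-p_yq_y^+)+\Delta\mathrm{eq.odds}(y,\hat y\mid D=0)\Bigl(1-p_D\frac{q_y-q_y^+}{p_y-p_y^+}\Bigr). \]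
   Context: Notation: $p^+=\mathbb{P}(A=1)$, $q^+=\mathbb{P}(A=1\mid D=1)$, $p_y=\mathbb{P}(Y=y)$, $q_y=\mathbb{P}(Y=y\mid D=1)$, $p_y^+=\mathbb{P}(Y=y,A=1)$, $q_y^+=\mathbb{P}(Y=y,A=1\mid D=1)$ (so $q^+=\sum_y q_y^+$). Base-classifier quantities: $\varphi_y^{+}=\mathbb{P}(\hat Y=y\mid D=0,A=1)$, $\varphi_y^-=\mathbb{P}(\hat Y=y\mid D=0,A=0)$, $C^+_{y,\hat y}=\mathbb{P}(\hat Y=\hat y\mid D=0,Y=y,A=1)$, $C^-_{y,\hat y}=\mathbb{P}(\hat Y=\hat y\mid D=0,Y=y,A=0)$. Fairness gaps: $\Delta\mathrm{s.p.}(\hat y)=\mathbb{P}(\hat Y=\hat y\mid A=1)-\mathbb{P}(\hat Y=\hat y\mid A=0)$; $\Delta\mathrm{s.p.}(\hat y\mid D=0)=\mathbb{P}(\hat Y=\hat y\mid A=1,D=0)-\mathbb{P}(\hat Y=\hat y\mid A=0,D=0)=\varphi^+_{\hat y}-\varphi^-_{\hat y}$; $\Delta\mathrm{eq.odds}(y,\hat y)=\mathbb{P}(\hat Y=\hat y\mid A=1,Y=y)-\mathbb{P}(\hat Y=\hat y\mid A=0,Y=y)$; $\Delta\mathrm{eq.odds}(y,\hat y\mid D=0)$ is the same with $D=0$ added to both conditionings, equal to $C^+_{y,\hat y}-C^-_{y,\hat y}$; $\Delta\mathrm{eq.opp.}(y)=\Delta\mathrm{eq.odds}(y,y)$ and $\Delta\mathrm{eq.opp.}(y\mid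 D=0)=\Delta\mathrm{eq.odds}(y,y\mid D=0)$. *)

theory Defs
  imports "HOL-Probability.Probability"
begin

text \<open>The joint law of (Y, Yhat, A, D) is modelled on a discrete probability space
  given by a pmf M over an arbitrary outcome type.  A = 1 and D = 1 are the boolean
  values True.\<close>

definition Pr :: "'w pmf \<Rightarrow> ('w \<Rightarrow> bool) \<Rightarrow> real" where
  "Pr M E = measure_pmf.prob M {w. E w}"

definition cPr :: "'w pmf \<Rightarrow> ('w \<Rightarrow> bool) \<Rightarrow> ('w \<Rightarrow> bool) \<Rightarrow> real" where
  "cPr M E F = Pr M (\<lambda>w. E w \<and> F w) / Pr M F"

definition p_plus :: "'w pmf \<Rightarrow> ('w \<Rightarrow> bool) \<Rightarrow> real" where
  "p_plus M A = Pr M A"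

definition q_plus :: "'w pmf \<Rightarrow> ('w \<Rightarrow> bool) \<Rightarrow> ('w \<Rightarrow> bool) \<Rightarrow> real" where
  "q_plus M A D = cPr M A D"

definition p_y :: "'w pmf \<Rightarrow> ('w \<Rightarrow> nat) \<Rightarrow> nat \<Rightarrow> real" where
  "p_y M Y y = Pr M (\<lambda>w. Y w = y)"

definition q_y :: "'w pmf \<Rightarrow> ('w \<Rightarrow> nat) \<Rightarrow> ('w \<Rightarrow> bool) \<Rightarrow> nat \<Rightarrow> real" where
  "q_y M Y D y = cPr M (\<lambda>w. Y w = y) D"

definition p_y_plus :: "'w pmf \<Rightarrow> ('w \<Rightarrow> nat) \<Rightarrow> ('w \<Rightarrow> bool) \<Rightarrow> nat \<Rightarrow> real" where
  "p_y_plus M Y A y = Pr M (\<lambda>w. Y w = y \<and> A w)"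

definition q_y_plus :: "'w pmf \<Rightarrow> ('w \<Rightarrow> nat) \<Rightarrow> ('w \<Rightarrow> bool) \<Rightarrow> ('w \<Rightarrow> bool) \<Rightarrow> nat \<Rightarrow> real" where
  "q_y_plus M Y A D y = cPr M (\<lambda>w. Y w = y \<and> A w) D"

definition phi_plus :: "'w pmf \<Rightarrow> ('w \<Rightarrow> nat) \<Rightarrow> ('w \<Rightarrow> bool) \<Rightarrow> ('w \<Rightarrow> bool) \<Rightarrow> nat \<Rightarrow> real" where
  "phi_plus M Yh A D yh = cPr M (\<lambda>w. Yh w = yh) (\<lambda>w. \<not> D w \<and> A w)"

definition C_plus :: "'w pmf \<Rightarrow> ('w \<Rightarrow> nat) \<Rightarrow> ('w \<Rightarrow> nat) \<Rightarrow> ('w \<Rightarrow> bool) \<Rightarrow> ('w \<Rightarrow> bool)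
    \<Rightarrow> nat \<Rightarrow> nat \<Rightarrow> real" where
  "C_plus M Y Yh A D y yh = cPr M (\<lambda>w. Yh w = yh) (\<lambda>w. \<not> D w \<and> Y w = y \<and> A w)"

definition dsp :: "'w pmf \<Rightarrow> ('w \<Rightarrow> nat) \<Rightarrow> ('w \<Rightarrow> bool) \<Rightarrow> nat \<Rightarrow> real" where
  "dsp M Yh A yh = cPr M (\<lambda>w. Yh w = yh) A - cPr M (\<lambda>w. Yh w = yh) (\<lambda>w. \<not> A w)"

definition dsp0 :: "'w pmf \<Rightarrow> ('w \<Rightarrow> nat) \<Rightarrow> ('w \<Rightarrow> bool) \<Rightarrow> ('w \<Rightarrow> bool) \<Rightarrow> nat \<Rightarrow> real" where
  "dsp0 M Yh A D yh = cPr M (\<lambda>w. Yh w = yh) (\<lambda>w. A w \<and> \<not> D w)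
                    - cPr M (\<lambda>w. Yh w = yh) (\<lambda>w. \<not> A w \<and> \<not> D w)"

definition deqodds :: "'w pmf \<Rightarrow> ('w \<Rightarrow> nat) \<Rightarrow> ('w \<Rightarrow> nat) \<Rightarrow> ('w \<Rightarrow> bool) \<Rightarrow> nat \<Rightarrow> nat \<Rightarrow> real" where
  "deqodds M Y Yh A y yh = cPr M (\<lambda>w. Yh w = yh) (\<lambda>w. A w \<and> Y w = y)
                         - cPr M (\<lambda>w. Yh w = yh) (\<lambda>w. \<not> A w \<and> Y w = y)"

definition deqodds0 :: "'w pmf \<Rightarrow> ('w \<Rightarrow> nat) \<Rightarrow> ('w \<Rightarrow> nat) \<Rightarrow> ('w \<Rightarrow> bool) \<Rightarrow> ('w \<Rightarrow> bool)
    \<Rightarrow> nat \<Rightarrow> nat \<Rightarrow> real" where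
  "deqodds0 M Y Yh A D y yh = cPr M (\<lambda>w. Yh w = yh) (\<lambda>w. A w \<and> Y w = y \<and> \<not> D w)
                            - cPr M (\<lambda>w. Yh w = yh) (\<lambda>w. \<not> A w \<and> Y w = y \<and> \<not> D w)"

definition deqopp :: "'w pmf \<Rightarrow> ('w \<Rightarrow> nat) \<Rightarrow> ('w \<Rightarrow> nat) \<Rightarrow> ('w \<Rightarrow> bool) \<Rightarrow> nat \<Rightarrow> real" where
  "deqopp M Y Yh A y = deqodds M Y Yh A y y"

definition deqopp0 :: "'w pmf \<Rightarrow> ('w \<Rightarrow> nat) \<Rightarrow> ('w \<Rightarrow> nat) \<Rightarrow> ('w \<Rightarrow> bool) \<Rightarrow> ('w \<Rightarrow> bool)
    \<Rightarrow> nat \<Rightarrow> real" where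
  "deqopp0 M Y Yh A D y = deqodds0 M Y Yh A D y y"

end

theory Submission
  imports Defs
begin

text \<open>Split each conditional probability P(Yhat = yh | G) along D.  On D = 1 the prediction is
  perfect, so that part only involves the law of (Y, A, D); the D = 0 part is the base-classifier
  quantity.  For a difference of two such split ratios, the field identity
  (a1 + x1)/(m1 + n1) - (a0 + x0)/(m0 + n0)
    = (x1/n1 - x0/n0) (1 - m0/(m0 + n0)) + (a1 P0 - a0 P1 - (x1/n1)(m1 P0 - m0 P1)) / (P1 P0),
  with Pi = mi + ni, isolates the D = 0 gap; taking G = A, not A gives statistical parity and
  G = (A, Y = y), (not A, Y = y) gives equalized odds.\<close>

lemma Pr_split: "Pr M E = Pr M (\<lambda>w. E w \<and> F w) + Pr M (\<lambda>w. E w \<and> \<not> F w)"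
proof -
  have "{w. E w} = {w. E w \<and> F w} \<union> {w. E w \<and> \<not> F w}" by auto
  then show ?thesis
    unfolding Pr_def by (simp add: measure_pmf.finite_measure_Union disjoint_iff)
qed

lemma Pr_nonneg: "0 \<le> Pr M E"
  by (simp add: Pr_def)

lemma Pr_True: "Pr M (\<lambda>w. True) = 1"
  by (simp add: Pr_def)

lemma Pr_cong_support:
  assumes "\<And>w. w \<in> set_pmf M \<Longrightarrow> E w \<longleftrightarrow> F w"
  shows "Pr M E = Pr M F"
proof -
  have "{w. E w} \<inter> set_pmf M = {w. F w} \<inter> set_pmf M" using assms by auto
  then show ?thesis
    unfolding Pr_def by (metis measure_Int_set_pmf)
qed

lemma Pr_mult_cPr: "Pr M F * cPr M E F = Pr M (\<lambda>w. E w \<and> F w)"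
proof (cases "Pr M F = 0")
  case True
  have "Pr M (\<lambda>w. E w \<and> F w) \<le> Pr M F"
    unfolding Pr_def by (rule measure_pmf.finite_measure_mono) auto
  with True show ?thesis by (simp add: cPr_def Pr_nonneg antisym)
qed (simp add: cPr_def)

lemma cPr_eq_1_on_support:
  assumes "cPr M E F = 1" "w \<in> set_pmf M" "F w"
  shows "E w"
proof -
  have "Pr M (\<lambda>w. E w \<and> F w) = Pr M F"
    using assms(1) by (simp add: cPr_def)
  then have "Pr M (\<lambda>w. F w \<and> \<not> E w) = 0"
    using Pr_split[of M F E] by (simp add: conj_commute)
  then have "set_pmf M \<inter> {w. F w \<and> \<not> E w} = {}"
    unfolding Pr_def by (simp add: measure_pmf_zero_iff)
  with assms(2,3) show ?thesis by blast
qed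

lemma diff_of_split_ratios:
  fixes a1 x1 m1 n1 a0 x0 m0 n0 :: real
  assumes "n1 \<noteq> 0" "n0 \<noteq> 0" "m1 + n1 \<noteq> 0" "m0 + n0 \<noteq> 0"
  shows "(a1 + x1) / (m1 + n1) - (a0 + x0) / (m0 + n0)
    = (x1 / n1 - x0 / n0) * (1 - m0 / (m0 + n0))
      + (a1 * (m0 + n0) - a0 * (m1 + n1) - x1 / n1 * (m1 * (m0 + n0) - m0 * (m1 + n1)))
        / ((m1 + n1) * (m0 + n0))"
  using assms by (simp add: divide_simps) algebra

lemma cPr_diff_split:
  assumes pos1: "Pr M (\<lambda>w. G1 w \<and> \<not> D w) > 0"
    and pos0: "Pr M (\<lambda>w. G0 w \<and> \<not> D w) > 0"
  shows "cPr M E G1 - cPr M E G0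
    = (cPr M E (\<lambda>w. G1 w \<and> \<not> D w) - cPr M E (\<lambda>w. G0 w \<and> \<not> D w))
        * (1 - Pr M (\<lambda>w. G0 w \<and> D w) / Pr M G0)
      + (Pr M (\<lambda>w. E w \<and> G1 w \<and> D w) * Pr M G0 - Pr M (\<lambda>w. E w \<and> G0 w \<and> D w) * Pr M G1
         - cPr M E (\<lambda>w. G1 w \<and> \<not> D w)
             * (Pr M (\<lambda>w. G1 w \<and> D w) * Pr M G0 - Pr M (\<lambda>w. G0 w \<and> D w) * Pr M G1))
        / (Pr M G1 * Pr M G0)"
proof -
  have split: "Pr M G = Pr M (\<lambda>w. G w \<and> D w) + Pr M (\<lambda>w. G w \<and> \<not> D w)"
    "Pr M (\<lambda>w. E w \<and> G w) = Pr M (\<lambda>w. E w \<and> G w \<and> D w) + Pr M (\<lambda>w. E w \<and> G w \<and> \<not> D w)"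
    for G
    using Pr_split[of M G D] Pr_split[of M "\<lambda>w. E w \<and> G w" D] by simp_all
  have "Pr M (\<lambda>w. G w \<and> D w) + Pr M (\<lambda>w. G w \<and> \<not> D w) \<noteq> 0"
    if "Pr M (\<lambda>w. G w \<and> \<not> D w) > 0" for G
    using add_nonneg_pos[OF Pr_nonneg[of M "\<lambda>w. G w \<and> D w"] that] by simp
  then show ?thesis
    unfolding cPr_def split(2)[of G1] split(2)[of G0] split(1)[of G1] split(1)[of G0]
    using pos1 pos0 by (intro diff_of_split_ratios) simp_all
qed

lemma Pr_perfect_prediction:
  assumes "cPr M (\<lambda>w. Yh w = Y w) D = 1" and "\<And>w. F w \<Longrightarrow> D w"
  shows "Pr M (\<lambda>w. Yh w = yh \<and> F w) = Pr M (\<lambda>w. Y w = yh \<and> F w)"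
  using cPr_eq_1_on_support[OF assms(1)] assms(2) by (intro Pr_cong_support) auto

lemma dsp_decomposition:
  assumes perfect: "cPr M (\<lambda>w. Yh w = Y w) D = 1"
    and pos1: "Pr M (\<lambda>w. \<not> D w \<and> A w) > 0"
    and pos0: "Pr M (\<lambda>w. \<not> D w \<and> \<not> A w) > 0"
  shows "dsp M Yh A yh
    = Pr M D / (p_plus M A * (1 - p_plus M A)) *
        (phi_plus M Yh A D yh * (p_plus M A - q_plus M A D) - (q_y M Y D yh * p_plus M A - q_y_plus M Y A D yh))
      + dsp0 M Yh A D yh * (1 - Pr M D * ((1 - q_plus M A D) / (1 - p_plus M A)))"
proof -
  have not_A: "Pr M (\<lambda>w. \<not> A w) = 1 - p_plus M A"
    using Pr_split[of M "\<lambda>_. True" A] by (simp add: Pr_True p_plus_def)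
  have A_D: "Pr M (\<lambda>w. A w \<and> D w) = Pr M D * q_plus M A D"
    by (simp add: q_plus_def Pr_mult_cPr)
  have not_A_D: "Pr M (\<lambda>w. \<not> A w \<and> D w) = Pr M D * (1 - q_plus M A D)"
    using Pr_split[of M D A] A_D by (simp add: conj_commute algebra_simps)
  have A_D_label: "Pr M (\<lambda>w. Yh w = yh \<and> A w \<and> D w) = Pr M D * q_y_plus M Y A D yh"
    using Pr_mult_cPr[of M D "\<lambda>w. Y w = yh \<and> A w"]
    by (subst Pr_perfect_prediction[OF perfect]) (simp_all add: q_y_plus_def)
  have not_A_D_label: "Pr M (\<lambda>w. Yh w = yh \<and> \<not> A w \<and> D w)
      = Pr M D * (q_y M Y D yh - q_y_plus M Y A D yh)"
  proof -
    have "Pr M (\<lambda>w. Yh w = yh \<and> \<not> A w \<and> D w) = Pr M (\<lambda>w. (Y w = yh \<and> D w) \<and> \<not> A w)"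
      by (subst Pr_perfect_prediction[OF perfect]) (simp_all add: conj_commute conj_left_commute)
    also have "\<dots> = Pr M D * q_y M Y D yh - Pr M D * q_y_plus M Y A D yh"
      using Pr_split[of M "\<lambda>w. Y w = yh \<and> D w" A]
      by (simp add: q_y_def q_y_plus_def Pr_mult_cPr conj_commute conj_left_commute)
    finally show ?thesis by (simp add: algebra_simps)
  qed
  have phi_plus: "phi_plus M Yh A D yh = cPr M (\<lambda>w. Yh w = yh) (\<lambda>w. A w \<and> \<not> D w)"
    by (simp add: phi_plus_def conj_commute)
  from cPr_diff_split[of M A D "\<lambda>w. \<not> A w" "\<lambda>w. Yh w = yh"] pos1 pos0
  show ?thesis
    unfolding dsp_def dsp0_def phi_plus not_A A_D not_A_D A_D_label not_A_D_label
    by (simp add: p_plus_def conj_commute) (simp add: field_simps)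
qed

lemma deqodds_decomposition:
  assumes perfect: "cPr M (\<lambda>w. Yh w = Y w) D = 1"
    and pos1: "Pr M (\<lambda>w. \<not> D w \<and> Y w = y \<and> A w) > 0"
    and pos0: "Pr M (\<lambda>w. \<not> D w \<and> Y w = y \<and> \<not> A w) > 0"
  shows "deqodds M Y Yh A y yh
    = Pr M D / (p_y_plus M Y A y * (p_y M Y y - p_y_plus M Y A y))
        * (C_plus M Y Yh A D y yh - (if y = yh then 1 else 0))
        * (q_y M Y D y * p_y_plus M Y A y - p_y M Y y * q_y_plus M Y A D y)
      + deqodds0 M Y Yh A D y yh
        * (1 - Pr M D * ((q_y M Y D y - q_y_plus M Y A D y) / (p_y M Y y - p_y_plus M Y A y)))"
proof -
  have A: "Pr M (\<lambda>w. A w \<and> Y w = y) = p_y_plus M Y A y"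
    by (simp add: p_y_plus_def conj_commute)
  have not_A: "Pr M (\<lambda>w. \<not> A w \<and> Y w = y) = p_y M Y y - p_y_plus M Y A y"
    using Pr_split[of M "\<lambda>w. Y w = y" A] by (simp add: p_y_def p_y_plus_def conj_commute)
  have A_D: "Pr M (\<lambda>w. A w \<and> Y w = y \<and> D w) = Pr M D * q_y_plus M Y A D y"
    using Pr_mult_cPr[of M D "\<lambda>w. Y w = y \<and> A w"]
    by (simp add: q_y_plus_def conj_commute conj_left_commute)
  have not_A_D: "Pr M (\<lambda>w. \<not> A w \<and> Y w = y \<and> D w) = Pr M D * (q_y M Y D y - q_y_plus M Y A D y)"
    using Pr_split[of M "\<lambda>w. Y w = y \<and> D w" A] A_D Pr_mult_cPr[of M D "\<lambda>w. Y w = y"]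
    by (simp add: q_y_def algebra_simps conj_commute conj_left_commute)
  have label: "Pr M (\<lambda>w. Yh w = yh \<and> G w \<and> Y w = y \<and> D w)
      = (if y = yh then 1 else 0) * Pr M (\<lambda>w. G w \<and> Y w = y \<and> D w)" for G
  proof -
    have "Pr M (\<lambda>w. Yh w = yh \<and> G w \<and> Y w = y \<and> D w) = Pr M (\<lambda>w. Y w = yh \<and> G w \<and> Y w = y \<and> D w)"
      by (rule Pr_perfect_prediction[OF perfect]) simp
    moreover have "(\<lambda>w. Y w = yh \<and> G w \<and> Y w = y \<and> D w)
        = (if y = yh then (\<lambda>w. G w \<and> Y w = y \<and> D w) else (\<lambda>w. False))"
      by auto
    ultimately show ?thesis
      by (simp add: Pr_def)
  qed
  have C_plus: "C_plus M Y Yh A D y yh = cPr M (\<lambda>w. Yh w = yh) (\<lambda>w. A w \<and> Y w = y \<and> \<not> D w)"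
    by (simp add: C_plus_def conj_commute conj_left_commute)
  have "Pr M (\<lambda>w. A w \<and> Y w = y \<and> \<not> D w) > 0" "Pr M (\<lambda>w. \<not> A w \<and> Y w = y \<and> \<not> D w) > 0"
    using pos1 pos0 by (simp_all add: conj_commute conj_left_commute)
  with cPr_diff_split[of M "\<lambda>w. A w \<and> Y w = y" D "\<lambda>w. \<not> A w \<and> Y w = y" "\<lambda>w. Yh w = yh"]
  show ?thesis
    unfolding deqodds_def deqodds0_def C_plus
    by (simp add: A not_A A_D not_A_D label) (simp add: field_simps)
qed

theorem theorem8:
  fixes M :: "'w pmf" and K :: nat
    and Y Yh :: "'w \<Rightarrow> nat" and A D :: "'w \<Rightarrow> bool"
  assumes K: "K \<ge> 1"
    and rangeY: "\<And>w. Y w \<in> {1..K}"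
    and rangeYh: "\<And>w. Yh w \<in> {1..K}"
    and perfect: "cPr M (\<lambda>w. Yh w = Y w) D = 1"
    and pplus: "0 < p_plus M A" "p_plus M A < 1"
    and posD1: "Pr M D > 0"
    and posD0A1: "Pr M (\<lambda>w. \<not> D w \<and> A w) > 0"
    and posD0A0: "Pr M (\<lambda>w. \<not> D w \<and> \<not> A w) > 0"
    and posYA1: "\<And>y. y \<in> {1..K} \<Longrightarrow> p_y_plus M Y A y > 0"
    and posYA0: "\<And>y. y \<in> {1..K} \<Longrightarrow> p_y M Y y - p_y_plus M Y A y > 0"
    and posD0YA1: "\<And>y. y \<in> {1..K} \<Longrightarrow> Pr M (\<lambda>w. \<not> D w \<and> Y w = y \<and> A w) > 0"
    and posD0YA0: "\<And>y. y \<in> {1..K} \<Longrightarrow> Pr M (\<lambda>w. \<not> D w \<and> Y w = y \<and> \<not> A w) > 0"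
  shows "\<forall>y \<in> {1..K}. \<forall>yh \<in> {1..K}.
      (let pD = Pr M D; pp = p_plus M A; qp = q_plus M A D;
           py = p_y M Y y; qy = q_y M Y D y;
           pyp = p_y_plus M Y A y; qyp = q_y_plus M Y A D y
       in dsp M Yh A yh
            = pD / (pp * (1 - pp)) *
                (phi_plus M Yh A D yh * (pp - qp) - (q_y M Y D yh * pp - q_y_plus M Y A D yh))
              + dsp0 M Yh A D yh * (1 - pD * ((1 - qp) / (1 - pp)))
        \<and> deqopp M Y Yh A y
            = pD / (pyp * (py - pyp)) * (C_plus M Y Yh A D y y - 1) * (qy * pyp - py * qyp)
              + deqopp0 M Y Yh A D y * (1 - pD * ((qy - qyp) / (py - pyp)))
        \<and> deqodds M Y Yh A y yh
            = pD / (pyp * (py - pyp)) * (C_plus M Y Yh A D y yh - (if y = yh then 1 else 0))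
                * (qy * pyp - py * qyp)
              + deqodds0 M Y Yh A D y yh * (1 - pD * ((qy - qyp) / (py - pyp))))"
  using dsp_decomposition[OF perfect posD0A1 posD0A0]
    deqodds_decomposition[OF perfect posD0YA1 posD0YA0]
  unfolding Let_def deqopp_def deqopp0_def by simp

end
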